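(* Let $G\in\mathcal G^3_2$ and let $ab\in E(G)$ with $d(a)=d(b)=3$, such that $G-ab=A\cup B$ where $A,B$ are vertex-disjoint subgraphs with $a\in V(A)$, $b\in V(B)$. Let $\grave A$ be the subgraph of $G$ consisting of $A$, the vertex $b$ and the edge $ab$, and assume $v(\grave A)=6$ and $\lambda(\grave A)=2$. Let $z_1,z_2$ be the two neighbours of $b$ in $B$, and for $i=1,2$ let $x_iT_ib$ be a path with $bz_i\in E(T_i)$, with $e(T_i)\in\{2,3\}$, whose internal vertices have degree $2$ in $G$ and whose end $x_i\ne b$ has degree $3$ in $G$ (possibly $x_1=x_2$). Define $G'$ as follows. (a1.1) If $T_i=x_iz_ib$ for $i=1,2$ and $x_1\ne x_2$: $G'=G-(V(A)\cup\{b,z_1,z_2\})$. (a1.2) If $T_i=x_iz_ib$ for $i=1,2$ and $x_1=x_2$: $G'$ is obtained from $G-(V(A)\cup\{b\})$ by adding the edge $z_1z_2$. (a2.1) If $T_1=x_1y_1z_1b$, $T_2=x_2z_2b$ and $x_1\ne x_2$: $G'$ is obtained from $G-(V(A)\cup\{b,z_1,z_2\})$ by adding the edge $y_1x_2$. (a2.2) If $T_1=x_1y_1z_1b$, $T_2=x_2z_2b$ and $x_1=x_2$: $G'$ is obtained from $G-(V(A)\cup\{b,z_1\})$ by adding the edge $y_1z_2$. (a3) If $T_1=x_1y_1z_1b$ and $T_2=x_2y_2z_2b$: $G'$ is obtained from $G-(V(A)\cup\{b,z_1,z_2\})$ by adding the edge $y_1y_2$. Then $G'\in\mathcal G^3_2$,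 and $\lambda(G')\ge v(G')/4$ implies $\lambda(G)\ge v(G)/4$.
   Context: All graphs are finite and simple. For integers $1\le r\le s$, $\mathcal G^s_r$ denotes the set of graphs in which every vertex has degree at least $r$ and at most $s$. $d(x)$ is the degree of $x$ in $G$, $v(\cdot)$ and $e(\cdot)$ the numbers of vertices and edges. $\lambda(G)$ denotes the maximum number of pairwise vertex-disjoint subgraphs of $G$ each of which is a path with exactly two edges. *)

theory Defs
  imports Complex_Main
begin

type_synonym 'a graph = "'a set \<times> 'a set set"

definition verts :: "'a graph \<Rightarrow> 'a set" where "verts G = fst G"
definition edges :: "'a graph \<Rightarrow> 'a set set" where "edges G = snd G"

definition simple_graph :: "'a graph \<Rightarrow> bool" where
  "simple_graph G \<longleftrightarrow> finite (verts G) \<and>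
     (\<forall>e\<in>edges G. \<exists>u v. u \<noteq> v \<and> e = {u, v} \<and> u \<in> verts G \<and> v \<in> verts G)"

definition deg :: "'a graph \<Rightarrow> 'a \<Rightarrow> nat" where
  "deg G x = card {e \<in> edges G. x \<in> e}"

definition nverts :: "'a graph \<Rightarrow> nat" where "nverts G = card (verts G)"

definition Gclass :: "nat \<Rightarrow> nat \<Rightarrow> 'a graph \<Rightarrow> bool" where
  "Gclass r s G \<longleftrightarrow> simple_graph G \<and> (\<forall>x\<in>verts G. r \<le> deg G x \<and> deg G x \<le> s)"

definition induced :: "'a graph \<Rightarrow> 'a set \<Rightarrow> 'a graph" where
  "induced G S = (S \<inter> verts G, {e \<in> edges G. e \<subseteq> S})"

definition del_verts :: "'a graph \<Rightarrow> 'a set \<Rightarrow> 'a graph" where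
  "del_verts G S = induced G (verts G - S)"

definition add_edge :: "'a graph \<Rightarrow> 'a \<Rightarrow> 'a \<Rightarrow> 'a graph" where
  "add_edge G u v = (verts G, insert {u, v} (edges G))"

definition P2s :: "'a graph \<Rightarrow> ('a \<times> 'a \<times> 'a) set" where
  "P2s G = {(u, v, w). u \<noteq> w \<and> {u, v} \<in> edges G \<and> {v, w} \<in> edges G}"

fun tverts :: "'a \<times> 'a \<times> 'a \<Rightarrow> 'a set" where
  "tverts (u, v, w) = {u, v, w}"

definition lam :: "'a graph \<Rightarrow> nat" where
  "lam G = Max (card ` {S. S \<subseteq> P2s G \<and>
      (\<forall>t\<in>S. \<forall>t'\<in>S. t \<noteq> t' \<longrightarrow> tverts t \<inter> tverts t' = {})})"

end

theory Submission
  imports Defs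
begin

text \<open>Since \<open>ab\<close> is the only edge leaving \<open>A\<close>, the vertices of \<open>G'\<close> with a deleted neighbour are
  exactly the two ends of the new edge (in case (a1.1): \<open>x\<^sub>1\<close> and \<open>x\<^sub>2\<close>), each with a single
  deleted neighbour. The new edge gives it back, and in case (a1.1) \<open>x\<^sub>1\<close>, \<open>x\<^sub>2\<close> drop from
  degree 3 to 2, so \<open>G'\<close> stays in the class. In a packing of \<open>G'\<close> at most one 2-path uses the new
  edge; it is rerouted through the deleted edge at \<open>z\<^sub>1\<close> or \<open>z\<^sub>2\<close>, or, when \<open>x\<^sub>1 = x\<^sub>2\<close>,
  through the triangle at \<open>x\<^sub>1\<close>, into a 2-path of \<open>G\<close> avoiding \<open>A\<close> and \<open>b\<close>. Adding the two
  disjoint 2-paths inside \<open>A\<close> plus \<open>b\<close> gives \<open>\<lambda>(G) \<ge> \<lambda>(G') + 2\<close>, while at most 8 vertices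
  are deleted; hence \<open>\<lambda>(G') \<ge> v(G')/4\<close> implies \<open>\<lambda>(G) \<ge> (v(G') + 8)/4 \<ge> v(G)/4\<close>.\<close>

definition nbhd :: "'a graph \<Rightarrow> 'a \<Rightarrow> 'a set" where
  "nbhd G x = {y. {x, y} \<in> edges G}"

lemma mem_nbhd_commute: "y \<in> nbhd G x \<longleftrightarrow> x \<in> nbhd G y"
  by (simp add: nbhd_def insert_commute)

lemma mem_nbhd_iff_edge: "y \<in> nbhd G x \<longleftrightarrow> {x, y} \<in> edges G"
  by (simp add: nbhd_def)

lemma nbhd_subset_verts: "simple_graph G \<Longrightarrow> nbhd G x \<subseteq> verts G"
  unfolding simple_graph_def nbhd_def by (force simp: doubleton_eq_iff)

lemma not_mem_nbhd_self: "simple_graph G \<Longrightarrow> x \<notin> nbhd G x"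
  unfolding simple_graph_def nbhd_def by force

lemma finite_nbhd: "simple_graph G \<Longrightarrow> finite (nbhd G x)"
  using nbhd_subset_verts simple_graph_def finite_subset by metis

lemma deg_eq_card_nbhd:
  assumes "simple_graph G"
  shows "deg G x = card (nbhd G x)"
proof -
  have "bij_betw (\<lambda>y. {x, y}) (nbhd G x) {e \<in> edges G. x \<in> e}"
  proof (rule bij_betwI')
    fix e assume "e \<in> {e \<in> edges G. x \<in> e}"
    then obtain u v where "e = {u, v}" "e \<in> edges G" "x \<in> e"
      using assms unfolding simple_graph_def by blast
    then show "\<exists>y\<in>nbhd G x. e = {x, y}"
      unfolding nbhd_def by (auto simp: insert_commute)
  qed (auto simp: nbhd_def doubleton_eq_iff)
  then show ?thesis
    unfolding deg_def by (simp add: bij_betw_same_card)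
qed

lemma nbhd_eq_if_deg_2:
  assumes "simple_graph G" "deg G x = 2" "p \<in> nbhd G x" "q \<in> nbhd G x" "p \<noteq> q"
  shows "nbhd G x = {p, q}"
  using assms by (metis card_2_iff deg_eq_card_nbhd doubleton_eq_iff insertE singletonD)

lemma Gclass_iff_card_nbhd:
  "simple_graph G \<Longrightarrow>
    Gclass r s G \<longleftrightarrow> (\<forall>x\<in>verts G. r \<le> card (nbhd G x) \<and> card (nbhd G x) \<le> s)"
  by (simp add: Gclass_def deg_eq_card_nbhd)

lemma verts_del_verts [simp]: "verts (del_verts G R) = verts G - R"
  by (auto simp: del_verts_def induced_def verts_def)

lemma edges_del_verts: "edges (del_verts G R) = {e \<in> edges G. e \<subseteq> verts G - R}"
  by (auto simp: del_verts_def induced_def edges_def verts_def)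

lemma verts_add_edge [simp]: "verts (add_edge G u v) = verts G"
  by (simp add: add_edge_def verts_def)

lemma edges_add_edge: "edges (add_edge G u v) = insert {u, v} (edges G)"
  by (simp add: add_edge_def edges_def)

lemma simple_graph_del_verts: "simple_graph G \<Longrightarrow> simple_graph (del_verts G R)"
  unfolding simple_graph_def edges_del_verts by (simp add: Ball_def) blast

lemma simple_graph_add_edge:
  "simple_graph G \<Longrightarrow> u \<noteq> v \<Longrightarrow> u \<in> verts G \<Longrightarrow> v \<in> verts G \<Longrightarrow> simple_graph (add_edge G u v)"
  unfolding simple_graph_def edges_add_edge by (simp only: verts_add_edge ball_simps) blast

lemma simple_graph_induced: "simple_graph G \<Longrightarrow> simple_graph (induced G W)"
  unfolding simple_graph_def induced_def verts_def edges_def by (auto 0 4)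

lemma nbhd_del_verts:
  assumes "simple_graph G" "x \<notin> R"
  shows "nbhd (del_verts G R) x = nbhd G x - R"
proof -
  have "{x, y} \<subseteq> verts G" if "y \<in> nbhd G x" for y
    using that nbhd_subset_verts[OF assms(1)] mem_nbhd_commute[of y G x] by blast
  then show ?thesis
    using assms(2) by (auto simp: nbhd_def edges_del_verts)
qed

lemma nbhd_add_edge:
  "nbhd (add_edge G u v) x =
    nbhd G x \<union> (if x = u then {v} else {}) \<union> (if x = v then {u} else {})"
  by (auto simp: nbhd_def edges_add_edge doubleton_eq_iff)

lemma Gclass_2_3_del_verts:
  assumes G: "Gclass 2 3 G"
    and boundary: "\<And>w. w \<in> verts G - R \<Longrightarrow>
      nbhd G w \<inter> R = {} \<or> deg G w = 3 \<and> card (nbhd G w \<inter> R) = 1"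
  shows "Gclass 2 3 (del_verts G R)"
proof -
  have sG: "simple_graph G" using G by (simp add: Gclass_def)
  have "2 \<le> card (nbhd G w - R) \<and> card (nbhd G w - R) \<le> 3" if "w \<in> verts G - R" for w
    using boundary[OF that] G that finite_nbhd[OF sG, of w] card_Diff_subset_Int[of "nbhd G w" R]
    by (auto simp: Gclass_iff_card_nbhd[OF sG] deg_eq_card_nbhd[OF sG] Diff_triv)
  then show ?thesis
    by (simp add: Gclass_iff_card_nbhd simple_graph_del_verts[OF sG] nbhd_del_verts[OF sG])
qed

lemma card_nbhd_add_edge_del_verts_endpoint:
  assumes sG: "simple_graph G" and u: "u \<notin> R" "u \<noteq> v" "v \<notin> nbhd G u"
    and one: "card (nbhd G u \<inter> R) = 1"
  shows "card (nbhd (add_edge (del_verts G R) u v) u) = card (nbhd G u)"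
proof -
  have "nbhd (add_edge (del_verts G R) u v) u = insert v (nbhd G u - R)"
    using u by (auto simp: nbhd_add_edge nbhd_del_verts[OF sG])
  moreover have "card (nbhd G u - R) + 1 = card (nbhd G u)"
    using one finite_nbhd[OF sG, of u] card_Diff_subset_Int[of "nbhd G u" R]
      card_mono[OF finite_nbhd[OF sG] Int_lower1, of u R]
    by simp
  ultimately show ?thesis
    using u finite_nbhd[OF sG, of u] by simp
qed

lemma Gclass_2_3_add_edge_del_verts:
  assumes G: "Gclass 2 3 G"
    and uv: "u \<in> verts G - R" "v \<in> verts G - R" "u \<noteq> v" "v \<notin> nbhd G u"
    and boundary: "card (nbhd G u \<inter> R) = 1" "card (nbhd G v \<inter> R) = 1"
      "\<And>w. w \<in> verts G - R - {u, v} \<Longrightarrow> nbhd G w \<inter> R = {}"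
  shows "Gclass 2 3 (add_edge (del_verts G R) u v)"
proof -
  let ?G' = "add_edge (del_verts G R) u v"
  have sG: "simple_graph G" using G by (simp add: Gclass_def)
  have sG': "simple_graph ?G'"
    using uv by (intro simple_graph_add_edge simple_graph_del_verts[OF sG]) auto
  have card_G: "2 \<le> card (nbhd G w) \<and> card (nbhd G w) \<le> 3" if "w \<in> verts G" for w
    using G that by (simp add: Gclass_iff_card_nbhd[OF sG])
  have "card (nbhd ?G' w) = card (nbhd G w)" if w: "w \<in> verts G - R" for w
  proof -
    consider "w = u" | "w = v" | "w \<notin> {u, v}" by blast
    then show ?thesis
    proof cases
      case 1
      then show ?thesis
        using uv boundary by (simp add: card_nbhd_add_edge_del_verts_endpoint[OF sG])
    next
      case 2
      have "add_edge (del_verts G R) u v = add_edge (del_verts G R) v u"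
        by (simp add: add_edge_def insert_commute)
      then show ?thesis
        using 2 uv boundary mem_nbhd_commute[of v G u]
        by (simp add: card_nbhd_add_edge_del_verts_endpoint[OF sG])
    next
      case 3
      then show ?thesis
        using w boundary(3)[of w] by (auto simp: nbhd_add_edge nbhd_del_verts[OF sG] Diff_triv)
    qed
  qed
  then show ?thesis
    using card_G sG' by (simp add: Gclass_iff_card_nbhd)
qed

definition packing :: "'a graph \<Rightarrow> ('a \<times> 'a \<times> 'a) set \<Rightarrow> bool" where
  "packing H S \<longleftrightarrow> S \<subseteq> P2s H \<and> (\<forall>t\<in>S. \<forall>t'\<in>S. t \<noteq> t' \<longrightarrow> tverts t \<inter> tverts t' = {})"

lemma lam_eq_Max_packing: "lam H = Max (card ` {S. packing H S})"
  by (simp add: lam_def packing_def)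

lemma tverts_nonempty: "tverts t \<noteq> {}"
  by (cases t) auto

lemma tverts_subset_verts: "simple_graph H \<Longrightarrow> t \<in> P2s H \<Longrightarrow> tverts t \<subseteq> verts H"
  unfolding P2s_def simple_graph_def by (force simp: doubleton_eq_iff)

lemma P2s_mono: "edges H \<subseteq> edges G \<Longrightarrow> P2s H \<subseteq> P2s G"
  unfolding P2s_def by auto

lemma finite_P2s: "simple_graph H \<Longrightarrow> finite (P2s H)"
proof -
  assume sH: "simple_graph H"
  have "P2s H \<subseteq> verts H \<times> verts H \<times> verts H"
  proof
    fix t assume "t \<in> P2s H"
    then show "t \<in> verts H \<times> verts H \<times> verts H"
      using tverts_subset_verts[OF sH] by (cases t) auto
  qed
  moreover have "finite (verts H \<times> verts H \<times> verts H)"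
    using sH by (simp add: simple_graph_def)
  ultimately show ?thesis
    by (rule finite_subset)
qed

lemma finite_packing: "simple_graph H \<Longrightarrow> packing H S \<Longrightarrow> finite S"
  unfolding packing_def using finite_P2s finite_subset by metis

lemma finite_packings: "simple_graph H \<Longrightarrow> finite {S. packing H S}"
proof -
  have "{S. packing H S} \<subseteq> Pow (P2s H)"
    by (auto simp: packing_def)
  then show "simple_graph H \<Longrightarrow> ?thesis"
    using finite_P2s finite_Pow_iff finite_subset by metis
qed

lemma card_le_lam: "simple_graph H \<Longrightarrow> packing H S \<Longrightarrow> card S \<le> lam H"
proof -
  assume "simple_graph H" "packing H S"
  then show ?thesis
    unfolding lam_eq_Max_packing by (intro Max_ge finite_imageI finite_packings) auto
qed

lemma ex_packing_card_lam: "simple_graph H \<Longrightarrow> \<exists>S. packing H S \<and> card S = lam H"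
proof -
  assume sH: "simple_graph H"
  have "packing H {}"
    by (simp add: packing_def)
  then have "lam H \<in> card ` {S. packing H S}"
    unfolding lam_eq_Max_packing by (intro Max_in finite_imageI finite_packings[OF sH]) auto
  then show ?thesis by auto
qed

lemma packing_induced: "packing (induced G W) S \<Longrightarrow> packing G S \<and> (\<forall>t\<in>S. tverts t \<subseteq> W)"
  unfolding packing_def P2s_def induced_def edges_def by auto

lemma lam_add_lam_induced_le:
  assumes sG: "simple_graph G" and sG': "simple_graph G'"
    and lift: "\<And>S'. packing G' S' \<Longrightarrow>
      \<exists>S. packing G S \<and> card S = card S' \<and> (\<forall>t\<in>S. tverts t \<inter> W = {})"
  shows "lam G' + lam (induced G W) \<le> lam G"
proof -
  obtain S' where "packing G' S'" "card S' = lam G'"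
    using ex_packing_card_lam[OF sG'] by blast
  then obtain S where S: "packing G S" "card S = lam G'" "\<forall>t\<in>S. tverts t \<inter> W = {}"
    using lift by metis
  obtain T where T: "packing (induced G W) T" "card T = lam (induced G W)"
    using ex_packing_card_lam[OF simple_graph_induced[OF sG]] by blast
  have T_G: "packing G T" "\<forall>t\<in>T. tverts t \<subseteq> W"
    using packing_induced[OF T(1)] by auto
  have disj: "tverts t \<inter> tverts t' = {}" if "t \<in> S" "t' \<in> T" for t t'
    using S(3) T_G(2) that by blast
  have "packing G (S \<union> T)"
    unfolding packing_def
  proof (intro conjI ballI impI)
    show "S \<union> T \<subseteq> P2s G"
      using S(1) T_G(1) unfolding packing_def by blast
    fix t t' assume "t \<in> S \<union> T" "t' \<in> S \<union> T" "t \<noteq> t'"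
    then show "tverts t \<inter> tverts t' = {}"
      using S(1) T_G(1) disj[of t t'] disj[of t' t] unfolding packing_def by blast
  qed
  moreover have "S \<inter> T = {}"
    using disj tverts_nonempty by fastforce
  then have "card (S \<union> T) = lam G' + lam (induced G W)"
    using S T finite_packing[OF sG] T_G(1) by (simp add: card_Un_disjoint)
  ultimately show ?thesis
    using card_le_lam[OF sG] by metis
qed

lemma packing_lift:
  assumes sG': "simple_graph G'"
    and new: "\<And>t. t \<in> P2s G' - P2s G \<Longrightarrow> u \<in> tverts t \<and> (\<exists>t'\<in>P2s G. tverts t' \<subseteq> tverts t \<union> Z)"
    and Z: "Z \<inter> verts G' = {}"
    and S': "packing G' S'"
  shows "\<exists>S. packing G S \<and> card S = card S' \<and> (\<forall>t\<in>S. tverts t \<subseteq> verts G' \<union> Z)"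
proof (cases "S' \<subseteq> P2s G")
  case True
  then show ?thesis
    using S' tverts_subset_verts[OF sG'] unfolding packing_def by blast
next
  case False
  then obtain t0 where t0: "t0 \<in> S'" "t0 \<notin> P2s G" by blast
  have S'_verts: "tverts t \<subseteq> verts G'" if "t \<in> S'" for t
    using that S' tverts_subset_verts[OF sG'] unfolding packing_def by blast
  have S'_disj: "tverts t \<inter> tverts t' = {}" if "t \<in> S'" "t' \<in> S'" "t \<noteq> t'" for t t'
    using that S' unfolding packing_def by blast
  obtain t1 where t1: "t1 \<in> P2s G" "tverts t1 \<subseteq> tverts t0 \<union> Z"
    using new t0 S' unfolding packing_def by blast
  \<comment> \<open>All new 2-paths pass through \<open>u\<close>, so \<open>t0\<close> is the only one in the packing \<open>S'\<close>.\<close>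
  have rest_G: "S' - {t0} \<subseteq> P2s G"
  proof
    fix t assume t: "t \<in> S' - {t0}"
    show "t \<in> P2s G"
    proof (rule ccontr)
      assume "t \<notin> P2s G"
      then have "u \<in> tverts t \<inter> tverts t0"
        using new t t0 S' unfolding packing_def by blast
      then show False
        using S'_disj[of t t0] t t0 by blast
    qed
  qed
  have t1_disj: "tverts t1 \<inter> tverts t = {}" if "t \<in> S' - {t0}" for t
    using t1(2) S'_disj[of t t0] S'_verts[of t] Z that t0 by blast
  have "t1 \<notin> S' - {t0}"
    using t1_disj[of t1] tverts_nonempty[of t1] by auto
  then have "card (insert t1 (S' - {t0})) = card S'"
    by (metis card_insert_disjoint card_Suc_Diff1 finite_Diff finite_packing[OF sG' S'] t0(1))
  moreover have "packing G (insert t1 (S' - {t0}))"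
    unfolding packing_def
  proof (intro conjI ballI impI)
    show "insert t1 (S' - {t0}) \<subseteq> P2s G"
      using rest_G t1(1) by blast
    fix t t' assume "t \<in> insert t1 (S' - {t0})" "t' \<in> insert t1 (S' - {t0})" "t \<noteq> t'"
    then show "tverts t \<inter> tverts t' = {}"
      using S'_disj[of t t'] t1_disj[of t] t1_disj[of t'] by blast
  qed
  moreover have "\<forall>t\<in>insert t1 (S' - {t0}). tverts t \<subseteq> verts G' \<union> Z"
    using t1(2) S'_verts t0(1) by blast
  ultimately show ?thesis by blast
qed

lemma P2s_add_edge_new_cases:
  assumes "t \<in> P2s (add_edge H u v) - P2s H"
  shows "\<exists>w. {u, w} \<in> edges H \<and> t \<in> {(w, u, v), (v, u, w)}
           \<or> {v, w} \<in> edges H \<and> t \<in> {(u, v, w), (w, v, u)}"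
proof -
  obtain p q r where t: "t = (p, q, r)" "p \<noteq> r"
      "{p, q} \<in> insert {u, v} (edges H)" "{q, r} \<in> insert {u, v} (edges H)"
      "{p, q} \<notin> edges H \<or> {q, r} \<notin> edges H"
    using assms by (cases t) (auto simp: P2s_def edges_add_edge)
  then consider "{p, q} = {u, v}" "{q, r} \<in> edges H" | "{q, r} = {u, v}" "{p, q} \<in> edges H"
    by (metis doubleton_eq_iff insertE)
  then show ?thesis
    by cases (use t in \<open>auto simp: doubleton_eq_iff insert_commute\<close>)
qed

lemma P2s_add_edge_exchange_pendant:
  assumes sH: "simple_graph H" and HG: "edges H \<subseteq> edges G"
    and zu: "{u, zu} \<in> edges G" "zu \<notin> verts H"
    and zv: "{v, zv} \<in> edges G" "zv \<notin> verts H"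
    and t: "t \<in> P2s (add_edge H u v) - P2s G"
  shows "u \<in> tverts t \<and> (\<exists>t'\<in>P2s G. tverts t' \<subseteq> tverts t \<union> {zu, zv})"
proof -
  have "t \<notin> P2s H"
    using t P2s_mono[OF HG] by blast
  then obtain w where "{u, w} \<in> edges H \<and> t \<in> {(w, u, v), (v, u, w)}
      \<or> {v, w} \<in> edges H \<and> t \<in> {(u, v, w), (w, v, u)}"
    using P2s_add_edge_new_cases[of t H u v] t by (meson DiffD1 DiffI)
  then show ?thesis
  proof (elim disjE conjE)
    assume w: "{u, w} \<in> edges H" and "t \<in> {(w, u, v), (v, u, w)}"
    moreover have "w \<noteq> zu"
      using w zu(2) nbhd_subset_verts[OF sH, of u] by (auto simp: mem_nbhd_iff_edge)
    then have "(w, u, zu) \<in> P2s G"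
      using w zu(1) HG by (auto simp: P2s_def insert_commute)
    ultimately show ?thesis by force
  next
    assume w: "{v, w} \<in> edges H" and "t \<in> {(u, v, w), (w, v, u)}"
    moreover have "w \<noteq> zv"
      using w zv(2) nbhd_subset_verts[OF sH, of v] by (auto simp: mem_nbhd_iff_edge)
    then have "(zv, v, w) \<in> P2s G"
      using w zv(1) HG by (auto simp: P2s_def insert_commute)
    ultimately show ?thesis by force
  qed
qed

lemma P2s_add_edge_exchange_triangle:
  assumes HG: "edges H \<subseteq> edges G" and nbhd: "nbhd H u \<subseteq> {x}" "nbhd H v \<subseteq> {x}"
    and edges: "{u, x} \<in> edges G" "{v, x} \<in> edges G" "u \<noteq> v"
    and t: "t \<in> P2s (add_edge H u v) - P2s G"
  shows "u \<in> tverts t \<and> (\<exists>t'\<in>P2s G. tverts t' \<subseteq> tverts t)"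
proof -
  have "t \<notin> P2s H"
    using t P2s_mono[OF HG] by blast
  then have "t \<in> {(x, u, v), (v, u, x), (u, v, x), (x, v, u)}"
    using P2s_add_edge_new_cases[of t H u v] t nbhd by (auto simp: mem_nbhd_iff_edge)
  moreover have "(u, x, v) \<in> P2s G"
    using edges by (auto simp: P2s_def insert_commute)
  ultimately show ?thesis by force
qed

locale bridge_reduction =
  fixes G :: "'a graph" and VA VB :: "'a set" and a b z1 z2 :: 'a
  assumes G: "Gclass 2 3 G"
    and ab: "{a, b} \<in> edges G" and db: "deg G b = 3"
    and part: "verts G = VA \<union> VB" "VA \<inter> VB = {}" "a \<in> VA" "b \<in> VB"
    and cross: "\<forall>e\<in>edges G - {{a, b}}. e \<subseteq> VA \<or> e \<subseteq> VB"
    and vA: "nverts (induced G (VA \<union> {b})) = 6"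
    and lA: "lam (induced G (VA \<union> {b})) = 2"
    and nbrs: "z1 \<in> VB" "z2 \<in> VB" "z1 \<noteq> z2" "{b, z1} \<in> edges G" "{b, z2} \<in> edges G"
begin

lemma simple: "simple_graph G"
  using G by (simp add: Gclass_def)

lemma nbhd_subset_VB: "w \<in> VB \<Longrightarrow> w \<noteq> b \<Longrightarrow> nbhd G w \<subseteq> VB"
proof
  fix y assume w: "w \<in> VB" "w \<noteq> b" and "y \<in> nbhd G w"
  then have e: "{w, y} \<in> edges G" by (simp add: mem_nbhd_iff_edge)
  have "{w, y} \<noteq> {a, b}"
    using w part by (auto simp: doubleton_eq_iff)
  then have "{w, y} \<in> edges G - {{a, b}}"
    using e by simp
  then have "{w, y} \<subseteq> VA \<or> {w, y} \<subseteq> VB"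
    by (rule bspec[OF cross])
  then show "y \<in> VB"
    using w part by blast
qed

lemma nbhd_b: "nbhd G b = {a, z1, z2}"
proof -
  have "a \<noteq> z1" "a \<noteq> z2"
    using nbrs part by blast+
  then have "{a, z1, z2} \<subseteq> nbhd G b" "card {a, z1, z2} = 3"
    using ab nbrs by (auto simp: mem_nbhd_iff_edge insert_commute)
  moreover have "card (nbhd G b) = 3"
    using db deg_eq_card_nbhd[OF simple] by simp
  ultimately show ?thesis
    using card_subset_eq[OF finite_nbhd[OF simple]] by metis
qed

lemma z_notin_side_A: "z1 \<notin> VA \<union> {b}" "z2 \<notin> VA \<union> {b}"
  using nbrs part not_mem_nbhd_self[OF simple, of b] by (auto simp: mem_nbhd_iff_edge)

lemma nbhd_inter_deleted:
  assumes "w \<in> verts G - (VA \<union> {b} \<union> Z)"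
  shows "nbhd G w \<inter> (VA \<union> {b} \<union> Z) = (if w \<in> {z1, z2} then {b} else {}) \<union> nbhd G w \<inter> Z"
proof -
  have "w \<in> VB" "w \<noteq> a" "w \<noteq> b"
    using assms part by auto
  then have "nbhd G w \<inter> VA = {}" "b \<in> nbhd G w \<longleftrightarrow> w \<in> {z1, z2}"
    using nbhd_subset_VB part nbhd_b mem_nbhd_commute[of b G w] by auto
  then show ?thesis by auto
qed

lemma nbhd_inter_deleted_both:
  assumes "nbhd G z1 = {b, p1}" "nbhd G z2 = {b, p2}" "w \<in> verts G - (VA \<union> {b, z1, z2})"
  shows "nbhd G w \<inter> (VA \<union> {b, z1, z2}) = (if w = p1 then {z1} else {}) \<union> (if w = p2 then {z2} else {})"
proof -
  have "VA \<union> {b, z1, z2} = VA \<union> {b} \<union> {z1, z2}"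
    by auto
  then show ?thesis
    using nbhd_inter_deleted[of w "{z1, z2}"] assms mem_nbhd_commute[of z1 G w] mem_nbhd_commute[of z2 G w]
    by auto
qed

lemma reduction_bounds:
  assumes sG': "simple_graph G'" and verts: "verts G' = verts G - R"
    and R: "VA \<union> {b} \<subseteq> R" "R \<subseteq> VA \<union> {b} \<union> {z1, z2}"
    and new: "\<And>t. t \<in> P2s G' - P2s G \<Longrightarrow> u \<in> tverts t \<and> (\<exists>t'\<in>P2s G. tverts t' \<subseteq> tverts t \<union> Z)"
    and Z: "Z \<subseteq> R \<inter> {z1, z2}"
  shows "lam G' + 2 \<le> lam G \<and> nverts G \<le> nverts G' + 8"
proof
  have Z_G': "Z \<inter> verts G' = {}"
    using Z verts by blast
  have avoid: "(verts G' \<union> Z) \<inter> (VA \<union> {b}) = {}"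
    using verts R(1) Z z_notin_side_A by blast
  have "lam G' + lam (induced G (VA \<union> {b})) \<le> lam G"
  proof (rule lam_add_lam_induced_le[OF simple sG'])
    fix S' assume "packing G' S'"
    then obtain S where "packing G S" "card S = card S'" "\<forall>t\<in>S. tverts t \<subseteq> verts G' \<union> Z"
      using packing_lift[OF sG' new Z_G'] by blast
    with avoid show "\<exists>S. packing G S \<and> card S = card S' \<and> (\<forall>t\<in>S. tverts t \<inter> (VA \<union> {b}) = {})"
      by blast
  qed
  then show "lam G' + 2 \<le> lam G"
    using lA by simp
next
  have fin: "finite (verts G)"
    using simple by (simp add: simple_graph_def)
  have RG: "VA \<union> {b} \<union> {z1, z2} \<subseteq> verts G"
    using part nbrs by blast
  have "card (VA \<union> {b}) = 6"
    using vA part by (simp add: nverts_def induced_def verts_def Int_absorb2)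
  then have "card (VA \<union> {b} \<union> {z1, z2}) \<le> 8"
    using card_Un_le[of "VA \<union> {b}" "{z1, z2}"] nbrs(3) by simp
  then have "card R \<le> 8"
    using card_mono[OF finite_subset[OF RG fin] R(2)] by linarith
  moreover have "card (verts G) - card R \<le> card (verts G - R)"
    using finite_subset[OF subset_trans[OF R(2) RG] fin] by (rule diff_card_le_card_Diff)
  ultimately show "nverts G \<le> nverts G' + 8"
    using verts by (simp add: nverts_def)
qed

lemma add_edge_reduction:
  assumes R: "VA \<union> {b} \<subseteq> R" "R \<subseteq> VA \<union> {b} \<union> {z1, z2}"
    and uv: "u \<in> verts G - R" "v \<in> verts G - R" "u \<noteq> v" "v \<notin> nbhd G u"
    and boundary: "\<And>w. w \<in> verts G - R \<Longrightarrow>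
      nbhd G w \<inter> R = (if w = u then {ru} else {}) \<union> (if w = v then {rv} else {})"
    and new: "\<And>t. t \<in> P2s (add_edge (del_verts G R) u v) - P2s G \<Longrightarrow>
      u \<in> tverts t \<and> (\<exists>t'\<in>P2s G. tverts t' \<subseteq> tverts t \<union> Z)"
    and Z: "Z \<subseteq> R \<inter> {z1, z2}"
  shows "Gclass 2 3 (add_edge (del_verts G R) u v) \<and> lam (add_edge (del_verts G R) u v) + 2 \<le> lam G
    \<and> nverts G \<le> nverts (add_edge (del_verts G R) u v) + 8"
proof -
  have "simple_graph (add_edge (del_verts G R) u v)"
    using uv by (intro simple_graph_add_edge simple_graph_del_verts[OF simple]) auto
  moreover have "Gclass 2 3 (add_edge (del_verts G R) u v)"
    using uv boundary[OF uv(1)] boundary[OF uv(2)] boundary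
    by (intro Gclass_2_3_add_edge_del_verts[OF G uv]) auto
  ultimately show ?thesis
    using reduction_bounds[OF _ _ R new Z] by simp
qed

lemma pendant_path_2:
  assumes "distinct [x, z, b]" "{x, z} \<in> edges G" "deg G z = 2" "{b, z} \<in> edges G" "z \<in> VB"
  shows "nbhd G z = {b, x}" "x \<in> VB"
proof -
  show nz: "nbhd G z = {b, x}"
    using nbhd_eq_if_deg_2[OF simple assms(3), of b x] assms(1,2,4)
    by (auto simp: mem_nbhd_iff_edge insert_commute)
  show "x \<in> VB"
    using nbhd_subset_VB[OF assms(5)] nz assms(1) by auto
qed

lemma pendant_path_3:
  assumes "distinct [x, y, z, b]" "{x, y} \<in> edges G" "{y, z} \<in> edges G"
    "deg G z = 2" "deg G y = 2" "{b, z} \<in> edges G" "z \<in> VB"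
  shows "nbhd G z = {b, y}" "nbhd G y = {x, z}" "y \<in> VB" "x \<in> VB"
proof -
  show "nbhd G z = {b, y}" "y \<in> VB"
    using pendant_path_2[of y z] assms by auto
  moreover show "nbhd G y = {x, z}"
    using nbhd_eq_if_deg_2[OF simple assms(5), of x z] assms(1-3)
    by (simp add: mem_nbhd_iff_edge insert_commute)
  ultimately show "x \<in> VB"
    using nbhd_subset_VB assms(1) by auto
qed

lemma reduction_a11:
  assumes T1: "distinct [x1, z1, b]" "{x1, z1} \<in> edges G" "deg G z1 = 2" "deg G x1 = 3"
    and T2: "distinct [x2, z2, b]" "{x2, z2} \<in> edges G" "deg G z2 = 2" "deg G x2 = 3"
    and "x1 \<noteq> x2" and G': "G' = del_verts G (VA \<union> {b, z1, z2})"
  shows "Gclass 2 3 G' \<and> lam G' + 2 \<le> lam G \<and> nverts G \<le> nverts G' + 8"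
proof -
  have nz: "nbhd G z1 = {b, x1}" "nbhd G z2 = {b, x2}"
    using pendant_path_2[OF T1(1-3) nbrs(4,1)] pendant_path_2[OF T2(1-3) nbrs(5,2)] by auto
  note boundary = nbhd_inter_deleted_both[OF nz]
  have "Gclass 2 3 G'"
    unfolding G'
    by (rule Gclass_2_3_del_verts[OF G]) (use boundary T1(4) T2(4) \<open>x1 \<noteq> x2\<close> in auto)
  moreover have "P2s G' \<subseteq> P2s G"
    by (rule P2s_mono) (simp add: G' edges_del_verts)
  then have "lam G' + 2 \<le> lam G \<and> nverts G \<le> nverts G' + 8"
    by (intro reduction_bounds[where R = "VA \<union> {b, z1, z2}" and Z = "{}"])
      (auto simp: G' simple_graph_del_verts[OF simple])
  ultimately show ?thesis by blast
qed

lemma reduction_a12: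
  assumes T1: "distinct [x1, z1, b]" "{x1, z1} \<in> edges G" "deg G z1 = 2"
    and T2: "distinct [x2, z2, b]" "{x2, z2} \<in> edges G" "deg G z2 = 2"
    and "x1 = x2" and G': "G' = add_edge (del_verts G (VA \<union> {b})) z1 z2"
  shows "Gclass 2 3 G' \<and> lam G' + 2 \<le> lam G \<and> nverts G \<le> nverts G' + 8"
  unfolding G'
proof (rule add_edge_reduction[where Z = "{}" and ru = b and rv = b])
  have nz: "nbhd G z1 = {b, x1}" "nbhd G z2 = {b, x1}" and "x1 \<in> VB"
    using pendant_path_2[OF T1 nbrs(4,1)] pendant_path_2[OF T2 nbrs(5,2)] \<open>x1 = x2\<close> by auto
  show uv: "z1 \<in> verts G - (VA \<union> {b})" "z2 \<in> verts G - (VA \<union> {b})"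
    using nbrs part z_notin_side_A by auto
  show "z2 \<notin> nbhd G z1"
    using nz T2(1) \<open>x1 = x2\<close> by auto
  show "nbhd G w \<inter> (VA \<union> {b}) = (if w = z1 then {b} else {}) \<union> (if w = z2 then {b} else {})"
    if "w \<in> verts G - (VA \<union> {b})" for w
    using nbhd_inter_deleted[of w "{}"] that by simp
  have "nbhd (del_verts G (VA \<union> {b})) z1 = {x1}" "nbhd (del_verts G (VA \<union> {b})) z2 = {x1}"
    using nz \<open>x1 \<in> VB\<close> uv nbhd_del_verts[OF simple] part T1(1) by auto
  then show "z1 \<in> tverts t \<and> (\<exists>t'\<in>P2s G. tverts t' \<subseteq> tverts t \<union> {})"
    if "t \<in> P2s (add_edge (del_verts G (VA \<union> {b})) z1 z2) - P2s G" for t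
    using P2s_add_edge_exchange_triangle[of "del_verts G (VA \<union> {b})" G z1 x1 z2 t] that T1(2) T2(2)
      nbrs(3) \<open>x1 = x2\<close>
    by (simp add: edges_del_verts insert_commute)
qed (use nbrs(3) in auto)

lemma reduction_a21:
  assumes T1: "distinct [x1, y1, z1, b]" "{x1, y1} \<in> edges G" "{y1, z1} \<in> edges G"
      "deg G z1 = 2" "deg G y1 = 2"
    and T2: "distinct [x2, z2, b]" "{x2, z2} \<in> edges G" "deg G z2 = 2" "deg G x2 = 3"
    and "x1 \<noteq> x2" and G': "G' = add_edge (del_verts G (VA \<union> {b, z1, z2})) y1 x2"
  shows "Gclass 2 3 G' \<and> lam G' + 2 \<le> lam G \<and> nverts G \<le> nverts G' + 8"
  unfolding G'
proof (rule add_edge_reduction[where Z = "{z1, z2}"])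
  have nz: "nbhd G z1 = {b, y1}" "nbhd G z2 = {b, x2}" and ny1: "nbhd G y1 = {x1, z1}"
    and VB: "y1 \<in> VB" "x2 \<in> VB"
    using pendant_path_3[OF T1 nbrs(4,1)] pendant_path_2[OF T2(1-3) nbrs(5,2)] by auto
  show "y1 \<noteq> x2" "x2 \<notin> nbhd G y1"
    using ny1 T1(1,4,5) T2(4) \<open>x1 \<noteq> x2\<close> by auto
  have "y1 \<noteq> z2" "x2 \<noteq> z1"
    using nz(2) ny1 T1(1,4) T2(4) by (auto simp: doubleton_eq_iff)
  then show "y1 \<in> verts G - (VA \<union> {b, z1, z2})" "x2 \<in> verts G - (VA \<union> {b, z1, z2})"
    using VB part T1(1) T2(1) by auto
  show "nbhd G w \<inter> (VA \<union> {b, z1, z2}) = (if w = y1 then {z1} else {}) \<union> (if w = x2 then {z2} else {})"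
    if "w \<in> verts G - (VA \<union> {b, z1, z2})" for w
    using nbhd_inter_deleted_both[OF nz that] .
  show "y1 \<in> tverts t \<and> (\<exists>t'\<in>P2s G. tverts t' \<subseteq> tverts t \<union> {z1, z2})"
    if "t \<in> P2s (add_edge (del_verts G (VA \<union> {b, z1, z2})) y1 x2) - P2s G" for t
    using P2s_add_edge_exchange_pendant[OF simple_graph_del_verts[OF simple],
        of "VA \<union> {b, z1, z2}" G y1 z1 x2 z2 t] that T1(3) T2(2)
    by (simp add: edges_del_verts insert_commute)
qed auto

lemma reduction_a22:
  assumes T1: "distinct [x1, y1, z1, b]" "{x1, y1} \<in> edges G" "{y1, z1} \<in> edges G"
      "deg G z1 = 2" "deg G y1 = 2"
    and T2: "distinct [x2, z2, b]" "{x2, z2} \<in> edges G" "deg G z2 = 2"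
    and "x1 = x2" and G': "G' = add_edge (del_verts G (VA \<union> {b, z1})) y1 z2"
  shows "Gclass 2 3 G' \<and> lam G' + 2 \<le> lam G \<and> nverts G \<le> nverts G' + 8"
  unfolding G'
proof (rule add_edge_reduction[where Z = "{}" and ru = z1 and rv = b])
  have nz: "nbhd G z1 = {b, y1}" "nbhd G z2 = {b, x1}" and ny1: "nbhd G y1 = {x1, z1}"
    and VB: "y1 \<in> VB" "x1 \<in> VB"
    using pendant_path_3[OF T1 nbrs(4,1)] pendant_path_2[OF T2 nbrs(5,2)] \<open>x1 = x2\<close> by auto
  show "y1 \<noteq> z2" "z2 \<notin> nbhd G y1"
    using nz(2) ny1 T1(1) T2(1) nbrs(3) \<open>x1 = x2\<close> by (auto simp: doubleton_eq_iff)
  then show uv: "y1 \<in> verts G - (VA \<union> {b, z1})" "z2 \<in> verts G - (VA \<union> {b, z1})"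
    using VB nbrs part T1(1) T2(1) by auto
  show "nbhd G w \<inter> (VA \<union> {b, z1}) = (if w = y1 then {z1} else {}) \<union> (if w = z2 then {b} else {})"
    if "w \<in> verts G - (VA \<union> {b, z1})" for w
  proof -
    have "VA \<union> {b, z1} = VA \<union> {b} \<union> {z1}"
      by auto
    then show ?thesis
      using nbhd_inter_deleted[of w "{z1}"] that nz mem_nbhd_commute[of z1 G w] \<open>y1 \<noteq> z2\<close> by auto
  qed
  have "nbhd (del_verts G (VA \<union> {b, z1})) y1 = {x1}" "nbhd (del_verts G (VA \<union> {b, z1})) z2 = {x1}"
    using nz ny1 VB uv nbhd_del_verts[OF simple] part T1(1) by auto
  then show "y1 \<in> tverts t \<and> (\<exists>t'\<in>P2s G. tverts t' \<subseteq> tverts t \<union> {})"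
    if "t \<in> P2s (add_edge (del_verts G (VA \<union> {b, z1})) y1 z2) - P2s G" for t
    using P2s_add_edge_exchange_triangle[of "del_verts G (VA \<union> {b, z1})" G y1 x1 z2 t] that T1(2) T2(2)
      \<open>y1 \<noteq> z2\<close> \<open>x1 = x2\<close>
    by (simp add: edges_del_verts insert_commute)
qed auto

lemma reduction_a3:
  assumes T1: "distinct [x1, y1, z1, b]" "{x1, y1} \<in> edges G" "{y1, z1} \<in> edges G"
      "deg G z1 = 2" "deg G y1 = 2" "deg G x1 = 3"
    and T2: "distinct [x2, y2, z2, b]" "{x2, y2} \<in> edges G" "{y2, z2} \<in> edges G"
      "deg G z2 = 2" "deg G y2 = 2" "deg G x2 = 3"
    and G': "G' = add_edge (del_verts G (VA \<union> {b, z1, z2})) y1 y2"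
  shows "Gclass 2 3 G' \<and> lam G' + 2 \<le> lam G \<and> nverts G \<le> nverts G' + 8"
  unfolding G'
proof (rule add_edge_reduction[where Z = "{z1, z2}"])
  have nz: "nbhd G z1 = {b, y1}" "nbhd G z2 = {b, y2}"
    and ny: "nbhd G y1 = {x1, z1}" "nbhd G y2 = {x2, z2}"
    and VB: "y1 \<in> VB" "y2 \<in> VB"
    using pendant_path_3[OF T1(1-5) nbrs(4,1)] pendant_path_3[OF T2(1-5) nbrs(5,2)] by auto
  have "y1 \<noteq> z2" "y2 \<noteq> z1"
    using nz ny T1(1) T2(1) by (auto simp: doubleton_eq_iff)
  then show "y1 \<noteq> y2" "y2 \<notin> nbhd G y1"
    using ny T1(4,6) T2(5,6) nbrs(3) by (auto simp: doubleton_eq_iff)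
  show "y1 \<in> verts G - (VA \<union> {b, z1, z2})" "y2 \<in> verts G - (VA \<union> {b, z1, z2})"
    using VB part T1(1) T2(1) \<open>y1 \<noteq> z2\<close> \<open>y2 \<noteq> z1\<close> by auto
  show "nbhd G w \<inter> (VA \<union> {b, z1, z2}) = (if w = y1 then {z1} else {}) \<union> (if w = y2 then {z2} else {})"
    if "w \<in> verts G - (VA \<union> {b, z1, z2})" for w
    using nbhd_inter_deleted_both[OF nz that] .
  show "y1 \<in> tverts t \<and> (\<exists>t'\<in>P2s G. tverts t' \<subseteq> tverts t \<union> {z1, z2})"
    if "t \<in> P2s (add_edge (del_verts G (VA \<union> {b, z1, z2})) y1 y2) - P2s G" for t
    using P2s_add_edge_exchange_pendant[OF simple_graph_del_verts[OF simple],
        of "VA \<union> {b, z1, z2}" G y1 z1 y2 z2 t] that T1(3) T2(3)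
    by (simp add: edges_del_verts insert_commute)
qed auto

end

theorem lemma3p4:
  fixes G G' :: "'a graph" and VA VB :: "'a set" and a b z1 z2 x1 x2 y1 y2 :: 'a
  assumes G: "Gclass 2 3 G"
    and ab: "{a, b} \<in> edges G" and da: "deg G a = 3" and db: "deg G b = 3"
    and part: "verts G = VA \<union> VB" "VA \<inter> VB = {}" "a \<in> VA" "b \<in> VB"
    and cross: "\<forall>e\<in>edges G - {{a, b}}. e \<subseteq> VA \<or> e \<subseteq> VB"
    and vA: "nverts (induced G (VA \<union> {b})) = 6"
    and lA: "lam (induced G (VA \<union> {b})) = 2"
    and nb: "z1 \<in> VB" "z2 \<in> VB" "z1 \<noteq> z2" "{b, z1} \<in> edges G" "{b, z2} \<in> edges G"
    and cases:
      "(\<comment> \<open>(a1.1)\<close>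
          distinct [x1, z1, b] \<and> {x1, z1} \<in> edges G \<and> deg G z1 = 2 \<and> deg G x1 = 3 \<and>
          distinct [x2, z2, b] \<and> {x2, z2} \<in> edges G \<and> deg G z2 = 2 \<and> deg G x2 = 3 \<and>
          x1 \<noteq> x2 \<and> G' = del_verts G (VA \<union> {b, z1, z2}))
     \<or> (\<comment> \<open>(a1.2)\<close>
          distinct [x1, z1, b] \<and> {x1, z1} \<in> edges G \<and> deg G z1 = 2 \<and> deg G x1 = 3 \<and>
          distinct [x2, z2, b] \<and> {x2, z2} \<in> edges G \<and> deg G z2 = 2 \<and> deg G x2 = 3 \<and>
          x1 = x2 \<and> G' = add_edge (del_verts G (VA \<union> {b})) z1 z2)
     \<or> (\<comment> \<open>(a2.1)\<close>
          distinct [x1, y1, z1, b] \<and> {x1, y1} \<in> edges G \<and> {y1, z1} \<in> edges G \<and>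
          deg G z1 = 2 \<and> deg G y1 = 2 \<and> deg G x1 = 3 \<and>
          distinct [x2, z2, b] \<and> {x2, z2} \<in> edges G \<and> deg G z2 = 2 \<and> deg G x2 = 3 \<and>
          x1 \<noteq> x2 \<and> G' = add_edge (del_verts G (VA \<union> {b, z1, z2})) y1 x2)
     \<or> (\<comment> \<open>(a2.2)\<close>
          distinct [x1, y1, z1, b] \<and> {x1, y1} \<in> edges G \<and> {y1, z1} \<in> edges G \<and>
          deg G z1 = 2 \<and> deg G y1 = 2 \<and> deg G x1 = 3 \<and>
          distinct [x2, z2, b] \<and> {x2, z2} \<in> edges G \<and> deg G z2 = 2 \<and> deg G x2 = 3 \<and>
          x1 = x2 \<and> G' = add_edge (del_verts G (VA \<union> {b, z1})) y1 z2)
     \<or> (\<comment> \<open>(a3)\<close>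
          distinct [x1, y1, z1, b] \<and> {x1, y1} \<in> edges G \<and> {y1, z1} \<in> edges G \<and>
          deg G z1 = 2 \<and> deg G y1 = 2 \<and> deg G x1 = 3 \<and>
          distinct [x2, y2, z2, b] \<and> {x2, y2} \<in> edges G \<and> {y2, z2} \<in> edges G \<and>
          deg G z2 = 2 \<and> deg G y2 = 2 \<and> deg G x2 = 3 \<and>
          G' = add_edge (del_verts G (VA \<union> {b, z1, z2})) y1 y2)"
  shows "Gclass 2 3 G' \<and>
         (real (lam G') \<ge> real (nverts G') / 4 \<longrightarrow> real (lam G) \<ge> real (nverts G) / 4)"
proof -
  interpret bridge_reduction G VA VB a b z1 z2
    using G ab db part cross vA lA nb by unfold_locales auto
  have "Gclass 2 3 G' \<and> lam G' + 2 \<le> lam G \<and> nverts G \<le> nverts G' + 8"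
    using cases reduction_a11[of x1 x2 G'] reduction_a12[of x1 x2 G'] reduction_a21[of x1 y1 x2 G']
      reduction_a22[of x1 y1 x2 G'] reduction_a3[of x1 y1 x2 y2 G']
    by blast
  then show ?thesis
    by auto
qed

end
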